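(* Let $R_*\in(0,\pi)$ be the unique solution in $(0,\pi)$ of $R=(\sin R)(2-\cos R)$, and let $R\in[R_*,\pi]$. Then, with $\widehat W_R(\ell)=\frac{2}{\pi\ell^3}(\ell R-\sin(\ell R))$, $$\widehat W_R(\ell)\le\frac{\widehat W_R(1)}{\ell}\qquad\text{for all integers }\ell\ge1,$$ and the inequality is strict for every $\ell\ge3$.
   Context: $\widehat W_R(\ell)$ is the $\ell$-th Fourier coefficient $\int_{\mathbb T}W_R(\theta)e^{-2\pi i\ell\theta}d\theta$ of the Hegselmann--Krause interaction $W_R(\theta)=(R-2\pi|\theta|)_+^2$ on $\mathbb T=[-\frac12,\frac12)$, for $R\in[0,\pi]$. *)

theory Defs
  imports Complex_Main
begin

text \<open>Closed form of the l-th Fourier coefficient of the Hegselmann--Krause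
interaction W_R(theta) = (R - 2 pi |theta|)_+^2 on the torus, as given in the statement.\<close>
definition W_hat :: "real \<Rightarrow> real \<Rightarrow> real" where
  "W_hat R l = 2 / (pi * l ^ 3) * (l * R - sin (l * R))"

end

theory Submission
  imports Defs "HOL-Analysis.Complex_Transcendental"
begin

text \<open>Multiplying by \<open>\<pi> l\<^sup>3 / 2\<close>, the claim reads \<open>l R - sin (l R) \<le> l\<^sup>2 (R - sin R)\<close>.
For \<open>l = 2\<close> the difference of the two sides is \<open>2 hk_crit R\<close>, whose root is \<open>R\<^sub>*\<close>.
Since \<open>hk_crit' x = 2 cos x (cos x - 1)\<close>, \<open>hk_crit\<close> is negative on \<open>(0, \<pi>/2]\<close> and increasing
on \<open>[\<pi>/2, \<pi>]\<close>; as \<open>hk_crit (2\<pi>/3) < 0\<close>, this gives \<open>R\<^sub>* > 2\<pi>/3\<close> and \<open>hk_crit \<ge> 0\<close> on \<open>[R\<^sub>*, \<pi>]\<close>.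
For \<open>l \<ge> 3\<close> the bound \<open>R \<ge> 2\<close> alone makes \<open>l\<^sup>2 (R - sin R) - l R \<ge> 3\<close>, which beats \<open>|sin (l R)| \<le> 1\<close>.\<close>

definition hk_crit :: "real \<Rightarrow> real" where
  "hk_crit x = x - sin x * (2 - cos x)"

lemma hk_crit_has_real_derivative: "(hk_crit has_real_derivative 2 * cos x * (cos x - 1)) (at x)"
proof -
  have "(hk_crit has_real_derivative 1 - (cos x * (2 - cos x) + sin x * (0 - - sin x))) (at x)"
    unfolding hk_crit_def by (auto intro!: derivative_eq_intros)
  moreover have "1 - (cos x * (2 - cos x) + sin x * (0 - - sin x)) = 2 * cos x * (cos x - 1)"
    using sin_cos_squared_add[of x] by (simp add: algebra_simps power2_eq_square)
  ultimately show ?thesis by simp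
qed

lemma hk_crit_neg:
  assumes "0 < x" "x \<le> pi / 2"
  shows "hk_crit x < 0"
proof -
  have "hk_crit x < hk_crit 0"
  proof (rule DERIV_neg_imp_decreasing_open[OF assms(1)])
    fix y assume y: "0 < y" "y < x"
    have "0 < cos y" using cos_gt_zero[of y] y assms by simp
    moreover have "cos y < 1" using cos_monotone_0_pi[of 0 y] y assms by simp
    ultimately have "2 * cos y * (cos y - 1) < 0" by (simp add: mult_pos_neg)
    then show "\<exists>d. (hk_crit has_real_derivative d) (at y) \<and> d < 0"
      using hk_crit_has_real_derivative by blast
  next
    show "continuous_on {0..x} hk_crit" unfolding hk_crit_def by (intro continuous_intros)
  qed
  then show ?thesis by (simp add: hk_crit_def)
qed

lemma hk_crit_mono:
  assumes "pi / 2 \<le> x" "x \<le> y" "y \<le> pi"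
  shows "hk_crit x \<le> hk_crit y"
proof (rule DERIV_nonneg_imp_nondecreasing[OF assms(2)])
  fix z assume z: "x \<le> z" "z \<le> y"
  have "cos z \<le> 0" using z assms cos_monotone_0_pi_le[of "pi / 2" z] by simp
  then have "0 \<le> 2 * cos z * (cos z - 1)" using cos_le_one[of z]
    by (simp add: mult_nonpos_nonpos)
  then show "\<exists>d. (hk_crit has_real_derivative d) (at z) \<and> 0 \<le> d"
    using hk_crit_has_real_derivative by blast
qed

lemma hk_crit_two_thirds_pi_neg: "hk_crit (2 * pi / 3) < 0"
proof -
  have "1.7 < sqrt 3" by (rule real_less_rsqrt) (simp add: power2_eq_square)
  then show ?thesis unfolding hk_crit_def cos_120 sin_120 using pi_approx by simp
qed

lemma hk_crit_root_gt_two_thirds_pi: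
  assumes "0 < x" "x < pi" "hk_crit x = 0"
  shows "2 * pi / 3 < x"
proof (rule ccontr)
  assume "\<not> 2 * pi / 3 < x"
  moreover have "hk_crit x < 0" if "pi / 2 < x" "x \<le> 2 * pi / 3"
    using hk_crit_mono[of x "2 * pi / 3"] hk_crit_two_thirds_pi_neg that by simp
  ultimately show False
    using hk_crit_neg[of x] assms by (cases "x \<le> pi / 2") simp_all
qed

lemma W_hat_le_div_iff:
  fixes R l :: real
  assumes "0 < l"
  shows "W_hat R l \<le> W_hat R 1 / l \<longleftrightarrow> l * R - sin (l * R) \<le> l\<^sup>2 * (R - sin R)"
    and "W_hat R l < W_hat R 1 / l \<longleftrightarrow> l * R - sin (l * R) < l\<^sup>2 * (R - sin R)"
proof -
  have W1: "W_hat R 1 / l = 2 / (pi * l ^ 3) * (l\<^sup>2 * (R - sin R))"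
    unfolding W_hat_def using assms by (simp add: field_simps power2_eq_square power3_eq_cube)
  have "0 < 2 / (pi * l ^ 3)" using assms by simp
  then show "W_hat R l \<le> W_hat R 1 / l \<longleftrightarrow> l * R - sin (l * R) \<le> l\<^sup>2 * (R - sin R)"
    and "W_hat R l < W_hat R 1 / l \<longleftrightarrow> l * R - sin (l * R) < l\<^sup>2 * (R - sin R)"
    unfolding W1 unfolding W_hat_def
    by (simp_all only: mult_le_cancel_left_pos mult_less_cancel_left_pos)
qed

lemma W_hat_two_le:
  assumes "0 \<le> hk_crit R"
  shows "W_hat R 2 \<le> W_hat R 1 / 2"
proof -
  have "2\<^sup>2 * (R - sin R) - (2 * R - sin (2 * R)) = 2 * hk_crit R"
    unfolding hk_crit_def sin_double by (simp add: algebra_simps)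
  then show ?thesis using W_hat_le_div_iff(1)[of 2 R] assms by simp
qed

lemma W_hat_lt_div:
  fixes R l :: real
  assumes "2 \<le> R" "3 \<le> l"
  shows "W_hat R l < W_hat R 1 / l"
proof -
  define a where "a = R - sin R"
  have "0 \<le> 3 * a - R" and "3 \<le> 3 * (3 * a - R)"
    using sin_le_one[of R] assms unfolding a_def by argo+
  moreover have "3 * a - R \<le> l * a - R"
    using \<open>0 \<le> 3 * a - R\<close> assms by (simp add: mult_right_mono)
  ultimately have "3 \<le> l * (l * a - R)"
    using mult_mono[of 3 l "3 * a - R" "l * a - R"] assms by linarith
  moreover have "l * (l * a - R) = l\<^sup>2 * a - l * R"
    by (simp add: power2_eq_square algebra_simps)
  ultimately have "l * R - sin (l * R) < l\<^sup>2 * a"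
    using sin_ge_minus_one[of "l * R"] by linarith
  then show ?thesis using W_hat_le_div_iff(2)[of l R] assms unfolding a_def by simp
qed

theorem lemma3p4:
  fixes Rs R :: real
  assumes "0 < Rs" and "Rs < pi" and "Rs = sin Rs * (2 - cos Rs)"
    and "Rs \<le> R" and "R \<le> pi"
  shows "(\<forall>l::nat. l \<ge> 1 \<longrightarrow> W_hat R (real l) \<le> W_hat R 1 / real l)
       \<and> (\<forall>l::nat. l \<ge> 3 \<longrightarrow> W_hat R (real l) < W_hat R 1 / real l)"
proof -
  have root: "hk_crit Rs = 0" using assms(3) unfolding hk_crit_def by simp
  have "2 * pi / 3 < Rs" using hk_crit_root_gt_two_thirds_pi[OF assms(1,2) root] .
  then have "2 \<le> R" and "0 \<le> hk_crit R"
    using hk_crit_mono[of Rs R] root assms(4,5) pi_gt3 by simp_all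
  then have strict: "W_hat R (real l) < W_hat R 1 / real l" if "3 \<le> l" for l :: nat
    using W_hat_lt_div[of R "real l"] that by simp
  moreover have "W_hat R (real l) \<le> W_hat R 1 / real l" if "1 \<le> l" for l :: nat
  proof -
    have "l = 1 \<or> l = 2 \<or> 3 \<le> l" using that by arith
    then show ?thesis using W_hat_two_le[OF \<open>0 \<le> hk_crit R\<close>] strict[of l] by auto
  qed
  ultimately show ?thesis by blast
qed

end
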